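(* Let $N_k\Rightarrow_{\mathrm{MO}}^* N_{k+l}$ be a sequence of Monadic transformations that removes exactly all occurrences of atoms $P(t_1,\dots,t_n)$ (for a fixed non-monadic $n$-ary predicate $P$) and replaces them by the atoms $T(f_P(t_1,\dots,t_n))$. If $N^\bot_{k+l}$ is a conflicting core of $N_{k+l}$, then there exists a conflicting core of $N_k$.
   Context: First-order logic without equality. A clause is a finite multiset of literals written $\Gamma \rightarrow \Delta$. A Herbrand interpretation is a set of ground atoms; $I \models \Gamma\rightarrow\Delta$ iff for every grounding substitution $\sigma$, $\Delta\sigma\cap I\neq\emptyset$ or $\Gamma\sigma\not\subseteq I$; a clause set is satisfiable if some Herbrand interpretation satisfies all its clauses. A finite clause set $N^\bot$ is a conflicting core if for every substitution $\tau$ grounding all of $N^\bot$ (one substitution for the whole set, so variables are shared among clauses) the set $N^\bot\tau$ is unsatisfiable. $N^\bot$ is a conflicting core of $N$ if moreover every $C\in N^\bot$ equals $C'\sigma$ for some $C'\in N$ and substitution $\sigma$. Monadic transformation: with a fixed monadic predicate $T$ and function symbol $f_P$, both fresh, replace an occurrence of the atom $P(t_1,\dots,t_n)$, $n>1$, in a clause by $T(f_P(t_1,\dots,t_n))$. *)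

theory Defs
  imports Main "HOL-Library.Multiset"
begin

datatype ('f, 'v) fterm = Var 'v | Fun 'f "('f, 'v) fterm list"

datatype ('p, 'f, 'v) atom = Atom 'p "('f, 'v) fterm list"

text \<open>A clause \<open>\<Gamma> \<rightarrow> \<Delta>\<close> is a pair of finite multisets of atoms (antecedent, succedent).\<close>
type_synonym ('p, 'f, 'v) clause = "('p, 'f, 'v) atom multiset \<times> ('p, 'f, 'v) atom multiset"

fun term_vars :: "('f, 'v) fterm \<Rightarrow> 'v set" where
  "term_vars (Var x) = {x}"
| "term_vars (Fun f ts) = (\<Union>t\<in>set ts. term_vars t)"

fun term_funs :: "('f, 'v) fterm \<Rightarrow> 'f set" where
  "term_funs (Var x) = {}"
| "term_funs (Fun f ts) = insert f (\<Union>t\<in>set ts. term_funs t)"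

fun term_subst :: "('v \<Rightarrow> ('f, 'v) fterm) \<Rightarrow> ('f, 'v) fterm \<Rightarrow> ('f, 'v) fterm" where
  "term_subst \<sigma> (Var x) = \<sigma> x"
| "term_subst \<sigma> (Fun f ts) = Fun f (map (term_subst \<sigma>) ts)"

definition ground_term :: "('f, 'v) fterm \<Rightarrow> bool" where
  "ground_term t \<longleftrightarrow> term_vars t = {}"

fun atom_pred :: "('p, 'f, 'v) atom \<Rightarrow> 'p" where
  "atom_pred (Atom p ts) = p"

fun atom_vars :: "('p, 'f, 'v) atom \<Rightarrow> 'v set" where
  "atom_vars (Atom p ts) = (\<Union>t\<in>set ts. term_vars t)"

fun atom_funs :: "('p, 'f, 'v) atom \<Rightarrow> 'f set" where
  "atom_funs (Atom p ts) = (\<Union>t\<in>set ts. term_funs t)"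

fun atom_subst :: "('v \<Rightarrow> ('f, 'v) fterm) \<Rightarrow> ('p, 'f, 'v) atom \<Rightarrow> ('p, 'f, 'v) atom" where
  "atom_subst \<sigma> (Atom p ts) = Atom p (map (term_subst \<sigma>) ts)"

definition ground_atom :: "('p, 'f, 'v) atom \<Rightarrow> bool" where
  "ground_atom A \<longleftrightarrow> atom_vars A = {}"

definition clause_atoms :: "('p, 'f, 'v) clause \<Rightarrow> ('p, 'f, 'v) atom set" where
  "clause_atoms C = set_mset (fst C) \<union> set_mset (snd C)"

definition clause_vars :: "('p, 'f, 'v) clause \<Rightarrow> 'v set" where
  "clause_vars C = (\<Union>A\<in>clause_atoms C. atom_vars A)"

definition clause_subst :: "('v \<Rightarrow> ('f, 'v) fterm) \<Rightarrow> ('p, 'f, 'v) clause \<Rightarrow> ('p, 'f, 'v) clause" where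
  "clause_subst \<sigma> C = (image_mset (atom_subst \<sigma>) (fst C), image_mset (atom_subst \<sigma>) (snd C))"

definition clauses_vars :: "('p, 'f, 'v) clause set \<Rightarrow> 'v set" where
  "clauses_vars N = (\<Union>C\<in>N. clause_vars C)"

definition clauses_preds :: "('p, 'f, 'v) clause set \<Rightarrow> 'p set" where
  "clauses_preds N = (\<Union>C\<in>N. atom_pred ` clause_atoms C)"

definition clauses_funs :: "('p, 'f, 'v) clause set \<Rightarrow> 'f set" where
  "clauses_funs N = (\<Union>C\<in>N. \<Union>A\<in>clause_atoms C. atom_funs A)"

definition grounding_on :: "'v set \<Rightarrow> ('v \<Rightarrow> ('f, 'v) fterm) \<Rightarrow> bool" where
  "grounding_on V \<sigma> \<longleftrightarrow> (\<forall>x\<in>V. ground_term (\<sigma> x))"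

definition herbrand_interp :: "('p, 'f, 'v) atom set \<Rightarrow> bool" where
  "herbrand_interp I \<longleftrightarrow> (\<forall>A\<in>I. ground_atom A)"

definition models_clause :: "('p, 'f, 'v) atom set \<Rightarrow> ('p, 'f, 'v) clause \<Rightarrow> bool" where
  "models_clause I C \<longleftrightarrow>
     (\<forall>\<sigma>. grounding_on (clause_vars C) \<sigma> \<longrightarrow>
        (set_mset (snd (clause_subst \<sigma> C)) \<inter> I \<noteq> {}
         \<or> \<not> set_mset (fst (clause_subst \<sigma> C)) \<subseteq> I))"

definition satisfiable :: "('p, 'f, 'v) clause set \<Rightarrow> bool" where
  "satisfiable N \<longleftrightarrow> (\<exists>I. herbrand_interp I \<and> (\<forall>C\<in>N. models_clause I C))"

definition conflicting_core :: "('p, 'f, 'v) clause set \<Rightarrow> bool" where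
  "conflicting_core Nb \<longleftrightarrow> finite Nb \<and>
     (\<forall>\<tau>. grounding_on (clauses_vars Nb) \<tau> \<longrightarrow> \<not> satisfiable (clause_subst \<tau> ` Nb))"

definition conflicting_core_of :: "('p, 'f, 'v) clause set \<Rightarrow> ('p, 'f, 'v) clause set \<Rightarrow> bool" where
  "conflicting_core_of Nb N \<longleftrightarrow> conflicting_core Nb \<and>
     (\<forall>C\<in>Nb. \<exists>C'\<in>N. \<exists>\<sigma>. C = clause_subst \<sigma> C')"

definition mo_clause_step :: "'p \<Rightarrow> nat \<Rightarrow> 'p \<Rightarrow> 'f \<Rightarrow> ('p, 'f, 'v) clause \<Rightarrow> ('p, 'f, 'v) clause \<Rightarrow> bool" where
  "mo_clause_step P n T fP C C' \<longleftrightarrow> 1 < n \<and>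
     (\<exists>ts. length ts = n \<and>
        ((Atom P ts \<in># fst C \<and>
          C' = (fst C - {#Atom P ts#} + {#Atom T [Fun fP ts]#}, snd C)) \<or>
         (Atom P ts \<in># snd C \<and>
          C' = (fst C, snd C - {#Atom P ts#} + {#Atom T [Fun fP ts]#}))))"

definition mo_step :: "'p \<Rightarrow> nat \<Rightarrow> 'p \<Rightarrow> 'f \<Rightarrow> ('p, 'f, 'v) clause set \<Rightarrow> ('p, 'f, 'v) clause set \<Rightarrow> bool" where
  "mo_step P n T fP N N' \<longleftrightarrow>
     (\<exists>C\<in>N. \<exists>C'. mo_clause_step P n T fP C C' \<and> N' = (N - {C}) \<union> {C'})"

end

theory Submission
  imports Defs
begin

text \<open>Undoing the transformation, i.e. mapping every atom \<open>T(f\<^sub>P(t\<^sub>1,\<dots>,t\<^sub>n))\<close> back to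
  \<open>P(t\<^sub>1,\<dots>,t\<^sub>n)\<close>, commutes with substitution as long as \<open>T\<close> only occurs in atoms of that shape;
  since \<open>T\<close> is fresh for \<open>N\<^sub>k\<close>, this shape is invariant under the transformation steps, and every
  clause of \<open>N\<^sub>k\<^sub>+\<^sub>l\<close> is undone to a clause of \<open>N\<^sub>k\<close>. Undoing a conflicting core of \<open>N\<^sub>k\<^sub>+\<^sub>l\<close>
  therefore yields instances of clauses of \<open>N\<^sub>k\<close>, and it is again a conflicting core: a Herbrand
  model \<open>I\<close> of an undone ground instance pulls back to the model
  \<open>{A ground. undo A \<in> I}\<close> of the original ground instance.\<close>

lemma term_subst_ground: "term_vars t = {} \<Longrightarrow> term_subst \<sigma> t = t"
  by (induction t) (auto intro: map_idI)

lemma atom_subst_ground: "atom_vars A = {} \<Longrightarrow> atom_subst \<sigma> A = A"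
  by (cases A) (auto intro: map_idI term_subst_ground)

lemma term_vars_term_subst_grounding:
  "grounding_on (term_vars t) \<tau> \<Longrightarrow> term_vars (term_subst \<tau> t) = {}"
  by (induction t) (auto simp: grounding_on_def ground_term_def)

lemma atom_vars_atom_subst_grounding:
  "grounding_on (atom_vars A) \<tau> \<Longrightarrow> atom_vars (atom_subst \<tau> A) = {}"
  by (cases A) (auto simp: grounding_on_def term_vars_term_subst_grounding)

definition map_clause ::
  "(('p, 'f, 'v) atom \<Rightarrow> ('q, 'g, 'w) atom) \<Rightarrow> ('p, 'f, 'v) clause \<Rightarrow> ('q, 'g, 'w) clause" where
  "map_clause f C = (image_mset f (fst C), image_mset f (snd C))"

lemma clause_subst_eq_map_clause: "clause_subst \<sigma> = map_clause (atom_subst \<sigma>)"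
  by (auto simp: clause_subst_def map_clause_def)

lemma clause_atoms_map_clause: "clause_atoms (map_clause f C) = f ` clause_atoms C"
  by (auto simp: clause_atoms_def map_clause_def)

lemma map_clause_cong:
  "(\<And>A. A \<in> clause_atoms C \<Longrightarrow> f A = g A) \<Longrightarrow> map_clause f C = map_clause g C"
  by (auto simp: map_clause_def clause_atoms_def intro!: image_mset_cong)

lemma map_clause_comp: "map_clause f (map_clause g C) = map_clause (f \<circ> g) C"
  by (simp add: map_clause_def multiset.map_comp)

lemma map_clause_ident: "(\<And>A. A \<in> clause_atoms C \<Longrightarrow> f A = A) \<Longrightarrow> map_clause f C = C"
  using map_clause_cong[of C f id] by (simp add: map_clause_def)

lemma clause_vars_map_clause:
  "(\<And>A. atom_vars (f A) = atom_vars A) \<Longrightarrow> clause_vars (map_clause f C) = clause_vars C"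
  by (simp add: clause_vars_def clause_atoms_map_clause)

lemma map_clause_clause_subst:
  assumes "\<And>A. A \<in> clause_atoms C \<Longrightarrow> f (atom_subst \<sigma> A) = atom_subst \<sigma> (f A)"
  shows "map_clause f (clause_subst \<sigma> C) = clause_subst \<sigma> (map_clause f C)"
  unfolding clause_subst_eq_map_clause map_clause_comp by (rule map_clause_cong) (simp add: assms)

lemma clause_subst_ground: "clause_vars C = {} \<Longrightarrow> clause_subst \<sigma> C = C"
  unfolding clause_subst_eq_map_clause
  by (rule map_clause_ident) (auto simp: clause_vars_def intro: atom_subst_ground)

lemma clause_vars_clause_subst_grounding:
  "grounding_on (clause_vars C) \<tau> \<Longrightarrow> clause_vars (clause_subst \<tau> C) = {}"
  unfolding clause_vars_def clause_subst_eq_map_clause clause_atoms_map_clause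
  using atom_vars_atom_subst_grounding by (fastforce simp: grounding_on_def)

lemma models_ground_clause:
  assumes "clause_vars C = {}"
  shows "models_clause I C \<longleftrightarrow> set_mset (snd C) \<inter> I \<noteq> {} \<or> \<not> set_mset (fst C) \<subseteq> I"
  using assms clause_subst_ground[OF assms]
  by (auto simp: models_clause_def grounding_on_def)

lemma satisfiable_map_clause_ground:
  assumes ground: "\<And>C. C \<in> M \<Longrightarrow> clause_vars C = {}"
    and vars: "\<And>A. atom_vars (f A) = atom_vars A"
    and sat: "satisfiable (map_clause f ` M)"
  shows "satisfiable M"
proof -
  obtain I where I: "\<And>C. C \<in> M \<Longrightarrow> models_clause I (map_clause f C)"
    using sat by (auto simp: satisfiable_def)
  define I' where "I' = {A. ground_atom A \<and> f A \<in> I}"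
  have "models_clause I' C" if C: "C \<in> M" for C
  proof -
    have "clause_vars (map_clause f C) = {}"
      using ground[OF C] clause_vars_map_clause[OF vars] by simp
    then have "set_mset (snd (map_clause f C)) \<inter> I \<noteq> {} \<or> \<not> set_mset (fst (map_clause f C)) \<subseteq> I"
      using I[OF C] models_ground_clause by blast
    moreover have "\<And>A. A \<in> clause_atoms C \<Longrightarrow> ground_atom A"
      using ground[OF C] by (auto simp: clause_vars_def ground_atom_def)
    ultimately show ?thesis
      using models_ground_clause[OF ground[OF C]]
      by (auto simp: map_clause_def I'_def clause_atoms_def)
  qed
  moreover have "herbrand_interp I'"
    by (simp add: herbrand_interp_def I'_def)
  ultimately show ?thesis
    by (auto simp: satisfiable_def)
qed

lemma conflicting_core_map_clause:
  fixes f :: "('p, 'f, 'v) atom \<Rightarrow> ('q, 'f, 'v) atom"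
  assumes core: "conflicting_core N"
    and vars: "\<And>A. atom_vars (f A) = atom_vars A"
    and subst: "\<And>C A \<sigma>. C \<in> N \<Longrightarrow> A \<in> clause_atoms C \<Longrightarrow> f (atom_subst \<sigma> A) = atom_subst \<sigma> (f A)"
  shows "conflicting_core (map_clause f ` N)"
  unfolding conflicting_core_def
proof (intro conjI allI impI)
  show "finite (map_clause f ` N)"
    using core by (simp add: conflicting_core_def)
next
  fix \<tau> :: "'v \<Rightarrow> ('f, 'v) fterm"
  assume "grounding_on (clauses_vars (map_clause f ` N)) \<tau>"
  then have grounding: "grounding_on (clauses_vars N) \<tau>"
    by (simp add: clauses_vars_def clause_vars_map_clause[OF vars])
  have "clause_subst \<tau> (map_clause f C) = map_clause f (clause_subst \<tau> C)" if "C \<in> N" for C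
    using map_clause_clause_subst subst[OF that] by metis
  then have "clause_subst \<tau> ` map_clause f ` N = map_clause f ` clause_subst \<tau> ` N"
    by (simp add: image_image)
  moreover have "clause_vars C = {}" if "C \<in> clause_subst \<tau> ` N" for C
    using that grounding clause_vars_clause_subst_grounding
    by (fastforce simp: grounding_on_def clauses_vars_def)
  ultimately show "\<not> satisfiable (clause_subst \<tau> ` map_clause f ` N)"
    using satisfiable_map_clause_ground[OF _ vars] core grounding
    by (metis conflicting_core_def)
qed

definition monadic_shaped :: "'p \<Rightarrow> 'f \<Rightarrow> nat \<Rightarrow> ('p, 'f, 'v) atom \<Rightarrow> bool" where
  "monadic_shaped T fP n A \<longleftrightarrow>
     (atom_pred A = T \<longrightarrow> (\<exists>us. length us = n \<and> A = Atom T [Fun fP us]))"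

definition undo_monadic :: "'p \<Rightarrow> 'p \<Rightarrow> 'f \<Rightarrow> nat \<Rightarrow> ('p, 'f, 'v) atom \<Rightarrow> ('p, 'f, 'v) atom" where
  "undo_monadic P T fP n A =
     (if \<exists>us. length us = n \<and> A = Atom T [Fun fP us]
      then Atom P (THE us. A = Atom T [Fun fP us]) else A)"

lemma undo_monadic_Atom_T:
  "length us = n \<Longrightarrow> undo_monadic P T fP n (Atom T [Fun fP us]) = Atom P us"
  by (auto simp: undo_monadic_def)

lemma undo_monadic_other: "atom_pred A \<noteq> T \<Longrightarrow> undo_monadic P T fP n A = A"
  by (auto simp: undo_monadic_def)

lemma atom_vars_undo_monadic: "atom_vars (undo_monadic P T fP n A) = atom_vars A"
  by (auto simp: undo_monadic_def)

lemma atom_pred_atom_subst: "atom_pred (atom_subst \<sigma> A) = atom_pred A"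
  by (cases A) auto

lemma monadic_shaped_atom_subst:
  "monadic_shaped T fP n A \<Longrightarrow> monadic_shaped T fP n (atom_subst \<sigma> A)"
  by (cases A) (auto simp: monadic_shaped_def)

lemma undo_monadic_atom_subst:
  assumes "monadic_shaped T fP n A"
  shows "undo_monadic P T fP n (atom_subst \<sigma> A) = atom_subst \<sigma> (undo_monadic P T fP n A)"
proof (cases "atom_pred A = T")
  case True
  then obtain us where "length us = n" "A = Atom T [Fun fP us]"
    using assms by (auto simp: monadic_shaped_def)
  then show ?thesis by (simp add: undo_monadic_Atom_T)
next
  case False
  then show ?thesis by (simp add: undo_monadic_other atom_pred_atom_subst)
qed

lemma undo_monadic_replace:
  assumes "Atom P ts \<in># M" "length ts = n" "P \<noteq> T"
  shows "image_mset (undo_monadic P T fP n) (M - {#Atom P ts#} + {#Atom T [Fun fP ts]#})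
       = image_mset (undo_monadic P T fP n) M"
proof -
  have "M = add_mset (Atom P ts) (M - {#Atom P ts#})"
    using assms(1) by simp
  then have "image_mset (undo_monadic P T fP n) M
           = add_mset (Atom P ts) (image_mset (undo_monadic P T fP n) (M - {#Atom P ts#}))"
    using assms(3) by (metis atom_pred.simps image_mset_add_mset undo_monadic_other)
  then show ?thesis
    using assms(2) by (simp add: undo_monadic_Atom_T)
qed

lemma mo_clause_step_undo:
  assumes step: "mo_clause_step P n T fP C C'"
    and shaped: "\<And>A. A \<in> clause_atoms C \<Longrightarrow> monadic_shaped T fP n A"
  shows "(\<forall>A\<in>clause_atoms C'. monadic_shaped T fP n A)
    \<and> map_clause (undo_monadic P T fP n) C' = map_clause (undo_monadic P T fP n) C"
proof -
  obtain ts where ts: "length ts = n"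
    "(Atom P ts \<in># fst C \<and> C' = (fst C - {#Atom P ts#} + {#Atom T [Fun fP ts]#}, snd C)) \<or>
     (Atom P ts \<in># snd C \<and> C' = (fst C, snd C - {#Atom P ts#} + {#Atom T [Fun fP ts]#}))"
    using step by (auto simp: mo_clause_step_def)
  have "n \<noteq> 1"
    using step by (simp add: mo_clause_step_def)
  moreover have "monadic_shaped T fP n (Atom P ts)"
    using ts(2) shaped by (auto simp: clause_atoms_def)
  ultimately have "P \<noteq> T"
    using ts(1) by (auto simp: monadic_shaped_def)
  moreover have "monadic_shaped T fP n (Atom T [Fun fP ts])"
    using ts(1) by (simp add: monadic_shaped_def)
  moreover have "clause_atoms C' \<subseteq> insert (Atom T [Fun fP ts]) (clause_atoms C)"
    using ts(2) by (auto simp: clause_atoms_def dest: in_diffD)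
  ultimately show ?thesis
    using ts shaped undo_monadic_replace[of P ts _ n T fP]
    by (auto simp: map_clause_def)
qed

definition undoes_into :: "'p \<Rightarrow> 'p \<Rightarrow> 'f \<Rightarrow> nat \<Rightarrow> ('p, 'f, 'v) clause set \<Rightarrow> ('p, 'f, 'v) clause set \<Rightarrow> bool" where
  "undoes_into P T fP n N\<^sub>0 N \<longleftrightarrow>
     (\<forall>C\<in>N. (\<forall>A\<in>clause_atoms C. monadic_shaped T fP n A)
       \<and> map_clause (undo_monadic P T fP n) C \<in> N\<^sub>0)"

lemma undoes_into_refl:
  assumes "T \<notin> clauses_preds N"
  shows "undoes_into P T fP n N N"
proof -
  have no_T: "\<forall>A\<in>clause_atoms C. atom_pred A \<noteq> T" if "C \<in> N" for C
    using assms that by (auto simp: clauses_preds_def)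
  then have "map_clause (undo_monadic P T fP n) C = C" if "C \<in> N" for C
    using that by (metis map_clause_ident undo_monadic_other)
  with no_T show ?thesis
    by (simp add: undoes_into_def monadic_shaped_def)
qed

lemma undoes_into_mo_step:
  assumes "undoes_into P T fP n N\<^sub>0 N" "mo_step P n T fP N N'"
  shows "undoes_into P T fP n N\<^sub>0 N'"
proof -
  obtain C C' where C: "C \<in> N" "mo_clause_step P n T fP C C'" "N' = N - {C} \<union> {C'}"
    using assms(2) by (auto simp: mo_step_def)
  then have "(\<forall>A\<in>clause_atoms C'. monadic_shaped T fP n A)
      \<and> map_clause (undo_monadic P T fP n) C' = map_clause (undo_monadic P T fP n) C"
    using assms(1) mo_clause_step_undo by (metis undoes_into_def)
  with C assms(1) show ?thesis
    by (auto simp: undoes_into_def)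
qed

lemma undoes_into_mo_steps:
  assumes "T \<notin> clauses_preds N" "(mo_step P n T fP)\<^sup>*\<^sup>* N N'"
  shows "undoes_into P T fP n N N'"
  using assms(2) by induction (auto intro: undoes_into_refl[OF assms(1)] undoes_into_mo_step)

lemma conflicting_core_of_undo_monadic:
  assumes undo: "undoes_into P T fP n N\<^sub>0 N" and core: "conflicting_core_of Nb N"
  shows "conflicting_core_of (map_clause (undo_monadic P T fP n) ` Nb) N\<^sub>0"
proof -
  let ?undo = "undo_monadic P T fP n"
  have instance_of: "\<exists>C'\<in>N. \<exists>\<sigma>. C = clause_subst \<sigma> C'" if "C \<in> Nb" for C
    using core that by (simp add: conflicting_core_of_def)
  have shaped: "monadic_shaped T fP n A" if C: "C \<in> Nb" and A: "A \<in> clause_atoms C" for C A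
  proof -
    obtain C' \<sigma> where "C' \<in> N" "C = clause_subst \<sigma> C'"
      using instance_of[OF C] by blast
    then obtain A' where "A' \<in> clause_atoms C'" "A = atom_subst \<sigma> A'"
      using A by (auto simp: clause_subst_eq_map_clause clause_atoms_map_clause)
    with undo \<open>C' \<in> N\<close> show ?thesis
      by (simp add: undoes_into_def monadic_shaped_atom_subst)
  qed
  have "conflicting_core (map_clause ?undo ` Nb)"
  proof (rule conflicting_core_map_clause)
    show "conflicting_core Nb"
      using core by (simp add: conflicting_core_of_def)
  qed (simp_all add: atom_vars_undo_monadic shaped undo_monadic_atom_subst)
  moreover have "\<exists>C'\<in>N\<^sub>0. \<exists>\<sigma>. map_clause ?undo C = clause_subst \<sigma> C'" if C: "C \<in> Nb" for C
  proof -
    obtain C' \<sigma> where C': "C' \<in> N" "C = clause_subst \<sigma> C'"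
      using instance_of[OF C] by blast
    then have "map_clause ?undo C = clause_subst \<sigma> (map_clause ?undo C')"
      using undo by (simp add: undoes_into_def map_clause_clause_subst undo_monadic_atom_subst)
    moreover have "map_clause ?undo C' \<in> N\<^sub>0"
      using undo C'(1) by (simp add: undoes_into_def)
    ultimately show ?thesis
      by blast
  qed
  ultimately show ?thesis
    by (simp add: conflicting_core_of_def)
qed

theorem lemma4:
  fixes P T :: 'p and fP :: 'f and n :: nat
    and Nk Nkl Nb :: "('p, 'f, 'v) clause set"
  assumes "1 < n"
    and fresh_T: "T \<notin> clauses_preds Nk"
    and fresh_f: "fP \<notin> clauses_funs Nk"
    and steps: "(mo_step P n T fP)\<^sup>*\<^sup>* Nk Nkl"
    and all_removed: "P \<notin> clauses_preds Nkl"
    and core: "conflicting_core_of Nb Nkl"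
  shows "\<exists>Nb'. conflicting_core_of Nb' Nk"
  using conflicting_core_of_undo_monadic[OF undoes_into_mo_steps[OF fresh_T steps] core] by blast

end
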